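(* Under Friends Appreciation, in every partition $\pi$ that maximizes the egalitarian welfare, every agent $i$ with $|F_i|=f_{\min}$ satisfies $F_i\subseteq \pi(i)$, i.e., is in the same coalition as all of her friends.
   Context: A friends-and-enemies instance consists of a set of agents $\mathcal{N}=\{1,\dots,n\}$ and, for each agent $i$, a set of friends $F_i\subseteq \mathcal{N}\setminus\{i\}$; the enemies of $i$ are $E_i=\mathcal{N}\setminus(F_i\cup\{i\})$. An outcome is a partition $\pi$ of $\mathcal{N}$; $\pi(i)$ is the coalition containing $i$. Under Friends Appreciation, $u_i(C)=|C\cap F_i|-\frac{1}{n}|C\cap E_i|$ for $C\ni i$, $u_i(\pi)=u_i(\pi(i))$, and $\mathsf{ESW}(\pi)=\min_i u_i(\pi)$. Here $f_{\min}=\min_{i\in\mathcal{N}}|F_i|$. *)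

theory Defs
  imports Complex_Main "HOL-Library.Disjoint_Sets"
begin

definition agents :: "nat \<Rightarrow> nat set" where
  "agents n = {1..n}"

definition enemies :: "nat \<Rightarrow> (nat \<Rightarrow> nat set) \<Rightarrow> nat \<Rightarrow> nat set" where
  "enemies n F i = agents n - (F i \<union> {i})"

definition coalition :: "nat set set \<Rightarrow> nat \<Rightarrow> nat set" where
  "coalition P i = (THE C. C \<in> P \<and> i \<in> C)"

definition util_FA :: "nat \<Rightarrow> (nat \<Rightarrow> nat set) \<Rightarrow> nat \<Rightarrow> nat set \<Rightarrow> real" where
  "util_FA n F i C = real (card (C \<inter> F i)) - (1 / real n) * real (card (C \<inter> enemies n F i))"

definition ESW :: "nat \<Rightarrow> (nat \<Rightarrow> nat set) \<Rightarrow> nat set set \<Rightarrow> real" where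
  "ESW n F P = Min ((\<lambda>i. util_FA n F i (coalition P i)) ` agents n)"

definition f_min :: "nat \<Rightarrow> (nat \<Rightarrow> nat set) \<Rightarrow> nat" where
  "f_min n F = Min ((\<lambda>i. card (F i)) ` agents n)"

definition max_ESW :: "nat \<Rightarrow> (nat \<Rightarrow> nat set) \<Rightarrow> nat set set \<Rightarrow> bool" where
  "max_ESW n F P \<longleftrightarrow> partition_on (agents n) P \<and>
     (\<forall>P'. partition_on (agents n) P' \<longrightarrow> ESW n F P' \<le> ESW n F P)"

end

theory Submission
  imports Defs
begin

text \<open>In the grand coalition every agent has all of her at least \<open>f_min\<close> friends, and the
  penalty for her at most \<open>n - 1\<close> enemies is strictly below 1; so the optimal egalitarian
  welfare exceeds \<open>f_min - 1\<close>. An agent with exactly \<open>f_min\<close> friends who misses one of them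
  has fewer than \<open>f_min\<close> friends in her coalition, hence utility at most \<open>f_min - 1\<close>,
  which is impossible in an optimal partition.\<close>

lemma coalition_singleton: "i \<in> A \<Longrightarrow> coalition {A} i = A"
  unfolding coalition_def by (rule the_equality) auto

lemma finite_agents [simp]: "finite (agents n)"
  by (simp add: agents_def)

lemma card_agents [simp]: "card (agents n) = n"
  by (simp add: agents_def)

lemma f_min_le_card_friends: "i \<in> agents n \<Longrightarrow> f_min n F \<le> card (F i)"
  unfolding f_min_def by (intro Min_le) auto

lemma ESW_le_util_FA: "i \<in> agents n \<Longrightarrow> ESW n F P \<le> util_FA n F i (coalition P i)"
  unfolding ESW_def by (intro Min_le) auto

lemma max_ESW_ge: "max_ESW n F P \<Longrightarrow> partition_on (agents n) P' \<Longrightarrow> ESW n F P' \<le> ESW n F P"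
  unfolding max_ESW_def by blast

lemma util_FA_le_card_friends: "util_FA n F i C \<le> real (card (C \<inter> F i))"
  unfolding util_FA_def by simp

lemma util_FA_gt_card_friends_minus_one:
  assumes i: "i \<in> agents n"
  shows "real (card (C \<inter> F i)) - 1 < util_FA n F i C"
proof -
  have n_pos: "n \<ge> 1"
    using i by (auto simp: agents_def)
  have "card (C \<inter> enemies n F i) \<le> card (agents n - {i})"
    by (intro card_mono) (auto simp: enemies_def)
  also have "\<dots> = n - 1"
    using i by simp
  finally have "real (card (C \<inter> enemies n F i)) \<le> real n - 1"
    using n_pos by (simp add: of_nat_diff)
  then have "(1 / real n) * real (card (C \<inter> enemies n F i)) \<le> (1 / real n) * (real n - 1)"
    by (intro mult_left_mono) auto
  also have "\<dots> < 1"
    using n_pos by (simp add: field_simps)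
  finally show ?thesis
    unfolding util_FA_def by simp
qed

lemma ESW_grand_coalition_gt:
  assumes friends: "\<And>i. i \<in> agents n \<Longrightarrow> F i \<subseteq> agents n - {i}"
    and nonempty: "agents n \<noteq> {}"
  shows "real (f_min n F) - 1 < ESW n F {agents n}"
proof -
  have "real (f_min n F) - 1 < util_FA n F i (coalition {agents n} i)" if i: "i \<in> agents n" for i
  proof -
    have "agents n \<inter> F i = F i"
      using friends[OF i] by auto
    then have "real (f_min n F) - 1 \<le> real (card (agents n \<inter> F i)) - 1"
      using f_min_le_card_friends[OF i] by simp
    also have "\<dots> < util_FA n F i (agents n)"
      using util_FA_gt_card_friends_minus_one[OF i] .
    finally show ?thesis
      unfolding coalition_singleton[OF i] .
  qed
  then show ?thesis
    unfolding ESW_def using nonempty by (subst Min_gr_iff) auto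
qed

lemma util_FA_le_f_min_minus_one:
  assumes friends: "\<And>i. i \<in> agents n \<Longrightarrow> F i \<subseteq> agents n - {i}"
    and i: "i \<in> agents n" and fewest: "card (F i) = f_min n F"
    and missing: "\<not> F i \<subseteq> C"
  shows "util_FA n F i C \<le> real (f_min n F) - 1"
proof -
  have "finite (F i)"
    using friends[OF i] by (rule finite_subset) simp
  moreover have "C \<inter> F i \<subset> F i"
    using missing by auto
  ultimately have "card (C \<inter> F i) < f_min n F"
    unfolding fewest[symmetric] by (rule psubset_card_mono)
  then show ?thesis
    using util_FA_le_card_friends[of n F i C] by linarith
qed

theorem corollary1:
  fixes n :: nat and F :: "nat \<Rightarrow> nat set" and P :: "nat set set"
  assumes friends: "\<And>i. i \<in> agents n \<Longrightarrow> F i \<subseteq> agents n - {i}"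
    and opt: "max_ESW n F P"
  shows "\<forall>i \<in> agents n. card (F i) = f_min n F \<longrightarrow> F i \<subseteq> coalition P i"
proof (intro ballI impI, rule ccontr)
  fix i assume i: "i \<in> agents n" and fewest: "card (F i) = f_min n F"
    and missing: "\<not> F i \<subseteq> coalition P i"
  have nonempty: "agents n \<noteq> {}"
    using i by auto
  have "real (f_min n F) - 1 < ESW n F {agents n}"
    using ESW_grand_coalition_gt[OF friends nonempty] .
  also have "\<dots> \<le> ESW n F P"
    using max_ESW_ge[OF opt partition_on_space[OF nonempty]] .
  also have "\<dots> \<le> util_FA n F i (coalition P i)"
    using ESW_le_util_FA[OF i] .
  also have "\<dots> \<le> real (f_min n F) - 1"
    using util_FA_le_f_min_minus_one[OF friends i fewest missing] .
  finally show False
    by simp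
qed

end
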